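(* Let $\{\mathcal H,\Gamma\}$ be an isometric boundary pair for $A^*$ with Weyl family $M$, $\gamma$-field $\gamma(\cdot)$ and $A_0=\ker\Gamma_0$. Fix $\lambda,\mu\in\mathbb C\setminus\mathbb R$ with $\lambda\ne\mu$. Then $\operatorname{dom}M(\mu)\subset\operatorname{dom}M(\lambda)$ if and only if $\operatorname{ran}\gamma(\mu)\subset\operatorname{ran}(A_0-\lambda)$. If one of these conditions holds, then $\gamma(\lambda)h=[I+(\lambda-\mu)(A_0-\lambda)^{-1}]\gamma(\mu)h$ for all $h\in\operatorname{dom}\gamma(\mu)$.
   Context: $A$ closed symmetric relation in $\mathfrak H$. A linear relation $\Gamma\subset\mathfrak H^2\times\mathcal H^2$ is isometric if $(f',g)-(f,g')=(h',k)-(h,k')$ for all $\{\{f,f'\},\{h,h'\}\},\{\{g,g'\},\{k,k'\}\}\in\Gamma$; $\{\mathcal H,\Gamma\}$ is an isometric boundary pair for $A^*$ if moreover $\operatorname{dom}\Gamma\subset A^*$ is dense in $A^*$. $\Gamma_0=\{\{\hat f,h\}:\{\hat f,\{h,h'\}\}\in\Gamma\}$; $A_0=\ker\Gamma_0$ is a (not necessarily closed) symmetric relation, so $(A_0-\lambda)^{-1}$ is a bounded operator on $\operatorname{ran}(A_0-\lambda)$ for nonreal $\lambda$. Weyl family $M(\lambda)=\{\hat h:\{\{f,\lambda f\},\hat h\}\in\Gamma\}$; $\gamma$-field $\gamma(\lambda)=\{\{h,f\}:\{\{f,\lambda f\},\{h,h'\}\}\in\Gamma\text{ for some }h'\}$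 (a single-valued operator with $\operatorname{dom}\gamma(\lambda)=\operatorname{dom}M(\lambda)$). *)

theory Defs
  imports "HOL-Analysis.Analysis"
begin

class cvec = real_vector +
  fixes scaleC :: "complex \<Rightarrow> 'a \<Rightarrow> 'a" (infixr \<open>*\<^sub>C\<close> 75)
  assumes scaleC_add_right: "a *\<^sub>C (x + y) = a *\<^sub>C x + a *\<^sub>C y"
    and scaleC_add_left: "(a + b) *\<^sub>C x = a *\<^sub>C x + b *\<^sub>C x"
    and scaleC_scaleC: "a *\<^sub>C (b *\<^sub>C x) = (a * b) *\<^sub>C x"
    and scaleC_one: "1 *\<^sub>C x = x"
    and scaleR_scaleC: "scaleR r x = complex_of_real r *\<^sub>C x"

class chilbert = cvec + banach +
  fixes cinner :: "'a \<Rightarrow> 'a \<Rightarrow> complex"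
  assumes cinner_add_left: "cinner (x + y) z = cinner x z + cinner y z"
    and cinner_scaleC_left: "cinner (a *\<^sub>C x) y = a * cinner x y"
    and cinner_conj: "cinner y x = cnj (cinner x y)"
    and norm_cinner: "norm x = sqrt (Re (cinner x x))"

definition lin_rel :: "('a::cvec \<times> 'b::cvec) set \<Rightarrow> bool" where
  "lin_rel R \<longleftrightarrow> (0, 0) \<in> R
     \<and> (\<forall>f f' g g'. (f, f') \<in> R \<longrightarrow> (g, g') \<in> R \<longrightarrow> (f + g, f' + g') \<in> R)
     \<and> (\<forall>c f f'. (f, f') \<in> R \<longrightarrow> (c *\<^sub>C f, c *\<^sub>C f') \<in> R)"

definition lin_brel :: "(('a::cvec \<times> 'a) \<times> ('b::cvec \<times> 'b)) set \<Rightarrow> bool" where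
  "lin_brel \<Gamma> \<longleftrightarrow> ((0, 0), (0, 0)) \<in> \<Gamma>
     \<and> (\<forall>f f' h h' g g' k k'. ((f, f'), (h, h')) \<in> \<Gamma> \<longrightarrow> ((g, g'), (k, k')) \<in> \<Gamma> \<longrightarrow>
          ((f + g, f' + g'), (h + k, h' + k')) \<in> \<Gamma>)
     \<and> (\<forall>c f f' h h'. ((f, f'), (h, h')) \<in> \<Gamma> \<longrightarrow>
          ((c *\<^sub>C f, c *\<^sub>C f'), (c *\<^sub>C h, c *\<^sub>C h')) \<in> \<Gamma>)"

definition adj :: "('a::chilbert \<times> 'a) set \<Rightarrow> ('a \<times> 'a) set" where
  "adj A = {(g, g'). \<forall>f f'. (f, f') \<in> A \<longrightarrow> cinner f' g = cinner f g'}"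

definition closed_symmetric_rel :: "('a::chilbert \<times> 'a) set \<Rightarrow> bool" where
  "closed_symmetric_rel A \<longleftrightarrow> lin_rel A \<and> closed A \<and> A \<subseteq> adj A"

definition isometric_rel ::
  "(('a::chilbert \<times> 'a) \<times> ('b::chilbert \<times> 'b)) set \<Rightarrow> bool" where
  "isometric_rel \<Gamma> \<longleftrightarrow>
     (\<forall>f f' h h' g g' k k'. ((f, f'), (h, h')) \<in> \<Gamma> \<longrightarrow> ((g, g'), (k, k')) \<in> \<Gamma> \<longrightarrow>
        cinner f' g - cinner f g' = cinner h' k - cinner h k')"

definition isometric_boundary_pair ::
  "('a::chilbert \<times> 'a) set \<Rightarrow> (('a \<times> 'a) \<times> ('b::chilbert \<times> 'b)) set \<Rightarrow> bool" where
  "isometric_boundary_pair A \<Gamma> \<longleftrightarrow> lin_brel \<Gamma> \<and> isometric_rel \<Gamma>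
     \<and> Domain \<Gamma> \<subseteq> adj A \<and> adj A \<subseteq> closure (Domain \<Gamma>)"

definition Gamma0 :: "(('a \<times> 'a) \<times> ('b \<times> 'b)) set \<Rightarrow> (('a \<times> 'a) \<times> 'b) set" where
  "Gamma0 \<Gamma> = {(fh, h). \<exists>h'. (fh, (h, h')) \<in> \<Gamma>}"

definition ker_rel :: "('a \<times> 'b::zero) set \<Rightarrow> 'a set" where
  "ker_rel R = {x. (x, 0) \<in> R}"

definition A0 :: "(('a \<times> 'a) \<times> ('b::zero \<times> 'b)) set \<Rightarrow> ('a \<times> 'a) set" where
  "A0 \<Gamma> = ker_rel (Gamma0 \<Gamma>)"

definition Weyl :: "(('a::cvec \<times> 'a) \<times> ('b \<times> 'b)) set \<Rightarrow> complex \<Rightarrow> ('b \<times> 'b) set" where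
  "Weyl \<Gamma> l = {hh. \<exists>f. ((f, l *\<^sub>C f), hh) \<in> \<Gamma>}"

definition gamma_field :: "(('a::cvec \<times> 'a) \<times> ('b \<times> 'b)) set \<Rightarrow> complex \<Rightarrow> ('b \<times> 'a) set" where
  "gamma_field \<Gamma> l = {(h, f). \<exists>h'. ((f, l *\<^sub>C f), (h, h')) \<in> \<Gamma>}"

definition shift_rel :: "('a::cvec \<times> 'a) set \<Rightarrow> complex \<Rightarrow> ('a \<times> 'a) set" where
  "shift_rel R l = {(f, f' - l *\<^sub>C f) | f f'. (f, f') \<in> R}"

definition inv_rel :: "('a \<times> 'b) set \<Rightarrow> ('b \<times> 'a) set" where
  "inv_rel R = {(y, x). (x, y) \<in> R}"

end

theory Submission
  imports Defs
begin

text \<open>If \<open>h\<close> lies in both \<open>dom \<gamma>(\<mu>)\<close> and \<open>dom \<gamma>(\<lambda>)\<close>, the difference of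
  \<open>{\<gamma>(\<mu>)h, \<mu> \<gamma>(\<mu>)h}\<close> and \<open>{\<gamma>(\<lambda>)h, \<lambda> \<gamma>(\<lambda>)h}\<close> has vanishing \<open>\<Gamma>\<^sub>0\<close>-part, so it lies in
  \<open>A\<^sub>0\<close>, and applying \<open>A\<^sub>0 - \<lambda>\<close> to it gives \<open>(\<mu> - \<lambda>) \<gamma>(\<mu>)h\<close>. Conversely, if
  \<open>\<gamma>(\<mu>)h = (A\<^sub>0 - \<lambda>)g\<close>, adding \<open>\<lambda> - \<mu>\<close> times the element \<open>{g, \<gamma>(\<mu>)h + \<lambda> g}\<close> of \<open>A\<^sub>0\<close>
  to \<open>{\<gamma>(\<mu>)h, \<mu> \<gamma>(\<mu>)h}\<close> produces an eigenelement for \<open>\<lambda>\<close> with the same boundary value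
  \<open>h\<close>, namely \<open>\<gamma>(\<mu>)h + (\<lambda> - \<mu>)g\<close>.\<close>

lemma scaleC_zero_left [simp]: "0 *\<^sub>C x = (0::'a::cvec)"
  using scaleR_scaleC[of 0 x] by simp

lemma scaleC_zero_right [simp]: "a *\<^sub>C (0::'a::cvec) = 0"
  using scaleC_add_right[of a "0::'a" 0] by simp

lemma scaleC_minus_left: "(- a) *\<^sub>C x = - (a *\<^sub>C (x::'a::cvec))"
  using scaleC_add_left[of a "- a" x] by (simp add: add_eq_0_iff2)

lemma scaleC_minus_right: "a *\<^sub>C (- x) = - (a *\<^sub>C (x::'a::cvec))"
  using scaleC_scaleC[of a "-1" x] by (simp add: scaleC_minus_left scaleC_one)

lemma scaleC_diff_right: "a *\<^sub>C (x - y) = a *\<^sub>C x - a *\<^sub>C (y::'a::cvec)"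
  using scaleC_add_right[of a x "- y"] by (simp add: scaleC_minus_right)

lemma lin_brel_add:
  assumes "lin_brel \<Gamma>" "((f, f'), (h, h')) \<in> \<Gamma>" "((g, g'), (k, k')) \<in> \<Gamma>"
  shows "((f + g, f' + g'), (h + k, h' + k')) \<in> \<Gamma>"
  using assms unfolding lin_brel_def by blast

lemma lin_brel_scaleC:
  assumes "lin_brel \<Gamma>" "((f, f'), (h, h')) \<in> \<Gamma>"
  shows "((c *\<^sub>C f, c *\<^sub>C f'), (c *\<^sub>C h, c *\<^sub>C h')) \<in> \<Gamma>"
  using assms unfolding lin_brel_def by blast

lemma lin_brel_diff:
  assumes "lin_brel \<Gamma>" "((f, f'), (h, h')) \<in> \<Gamma>" "((g, g'), (k, k')) \<in> \<Gamma>"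
  shows "((f - g, f' - g'), (h - k, h' - k')) \<in> \<Gamma>"
  using lin_brel_add[OF assms(1,2) lin_brel_scaleC[OF assms(1,3), of "-1"]]
  by (simp add: scaleC_minus_left scaleC_one)

lemma mem_A0_iff: "(g, g') \<in> A0 \<Gamma> \<longleftrightarrow> (\<exists>k. ((g, g'), (0, k)) \<in> \<Gamma>)"
  unfolding A0_def ker_rel_def Gamma0_def by auto

lemma mem_shift_rel_iff: "(g, f) \<in> shift_rel R l \<longleftrightarrow> (g, f + l *\<^sub>C g) \<in> R"
  unfolding shift_rel_def by force

lemma Domain_Weyl: "Domain (Weyl \<Gamma> l) = Domain (gamma_field \<Gamma> l)"
  unfolding Weyl_def gamma_field_def by blast

lemma gamma_field_resolvent_identity:
  assumes lin: "lin_brel \<Gamma>"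
    and hf: "(h, f) \<in> gamma_field \<Gamma> m"
    and gf: "(g, f) \<in> shift_rel (A0 \<Gamma>) l"
  shows "(h, f + (l - m) *\<^sub>C g) \<in> gamma_field \<Gamma> l"
proof -
  obtain h' where hf': "((f, m *\<^sub>C f), (h, h')) \<in> \<Gamma>"
    using hf unfolding gamma_field_def by blast
  obtain k where gk: "((g, f + l *\<^sub>C g), (0, k)) \<in> \<Gamma>"
    using gf by (auto simp: mem_shift_rel_iff mem_A0_iff)
  define d where "d = l - m"
  have "((f + d *\<^sub>C g, m *\<^sub>C f + d *\<^sub>C (f + l *\<^sub>C g)), (h, h' + d *\<^sub>C k)) \<in> \<Gamma>"
    using lin_brel_add[OF lin hf' lin_brel_scaleC[OF lin gk]] by simp
  moreover have "m *\<^sub>C f + d *\<^sub>C (f + l *\<^sub>C g) = l *\<^sub>C (f + d *\<^sub>C g)"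
  proof -
    have "m *\<^sub>C f + d *\<^sub>C (f + l *\<^sub>C g) = (m + d) *\<^sub>C f + (d * l) *\<^sub>C g"
      by (simp add: scaleC_add_right scaleC_add_left scaleC_scaleC)
    also have "\<dots> = l *\<^sub>C (f + d *\<^sub>C g)"
      by (simp add: scaleC_add_right scaleC_scaleC d_def mult.commute)
    finally show ?thesis .
  qed
  ultimately show ?thesis
    unfolding gamma_field_def d_def by auto
qed

lemma gamma_field_in_Range_shift_A0:
  assumes lin: "lin_brel \<Gamma>" and "l \<noteq> m"
    and hf: "(h, f) \<in> gamma_field \<Gamma> m"
    and hg: "(h, g) \<in> gamma_field \<Gamma> l"
  shows "f \<in> Range (shift_rel (A0 \<Gamma>) l)"
proof -
  obtain h' h'' where hf': "((f, m *\<^sub>C f), (h, h')) \<in> \<Gamma>"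
    and hg': "((g, l *\<^sub>C g), (h, h'')) \<in> \<Gamma>"
    using hf hg unfolding gamma_field_def by blast
  define c where "c = 1 / (m - l)"
  have "(c *\<^sub>C (f - g), c *\<^sub>C (m *\<^sub>C f - l *\<^sub>C g)) \<in> A0 \<Gamma>"
    using lin_brel_scaleC[OF lin lin_brel_diff[OF lin hf' hg'], of c]
    by (auto simp: mem_A0_iff)
  moreover have "c *\<^sub>C (m *\<^sub>C f - l *\<^sub>C g) = f + l *\<^sub>C (c *\<^sub>C (f - g))"
  proof -
    have "c * m = 1 + l * c"
      using \<open>l \<noteq> m\<close> by (simp add: c_def field_simps)
    then show ?thesis
      by (simp add: scaleC_diff_right scaleC_scaleC scaleC_add_left scaleC_one mult.commute)
  qed
  ultimately have "(c *\<^sub>C (f - g), f) \<in> shift_rel (A0 \<Gamma>) l"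
    by (simp add: mem_shift_rel_iff)
  then show ?thesis by blast
qed

lemma Domain_gamma_field_subset_iff:
  assumes lin: "lin_brel \<Gamma>" and "l \<noteq> m"
  shows "Domain (gamma_field \<Gamma> m) \<subseteq> Domain (gamma_field \<Gamma> l)
    \<longleftrightarrow> Range (gamma_field \<Gamma> m) \<subseteq> Range (shift_rel (A0 \<Gamma>) l)"
proof
  assume "Domain (gamma_field \<Gamma> m) \<subseteq> Domain (gamma_field \<Gamma> l)"
  then show "Range (gamma_field \<Gamma> m) \<subseteq> Range (shift_rel (A0 \<Gamma>) l)"
    using gamma_field_in_Range_shift_A0[OF assms] by blast
next
  assume "Range (gamma_field \<Gamma> m) \<subseteq> Range (shift_rel (A0 \<Gamma>) l)"
  then show "Domain (gamma_field \<Gamma> m) \<subseteq> Domain (gamma_field \<Gamma> l)"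
    using gamma_field_resolvent_identity[OF lin] by blast
qed

theorem mainTheorem16:
  fixes A :: "('a::chilbert \<times> 'a) set"
    and \<Gamma> :: "(('a \<times> 'a) \<times> ('b::chilbert \<times> 'b)) set"
    and l m :: complex
  assumes "closed_symmetric_rel A"
    and "isometric_boundary_pair A \<Gamma>"
    and "Im l \<noteq> 0" and "Im m \<noteq> 0" and "l \<noteq> m"
  shows "(Domain (Weyl \<Gamma> m) \<subseteq> Domain (Weyl \<Gamma> l)
            \<longleftrightarrow> Range (gamma_field \<Gamma> m) \<subseteq> Range (shift_rel (A0 \<Gamma>) l))
       \<and> (Domain (Weyl \<Gamma> m) \<subseteq> Domain (Weyl \<Gamma> l)
          \<longrightarrow> (\<forall>h f. (h, f) \<in> gamma_field \<Gamma> m \<longrightarrow>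
                 (\<exists>g. (f, g) \<in> inv_rel (shift_rel (A0 \<Gamma>) l))
               \<and> (\<forall>g. (f, g) \<in> inv_rel (shift_rel (A0 \<Gamma>) l) \<longrightarrow>
                    (h, f + (l - m) *\<^sub>C g) \<in> gamma_field \<Gamma> l)))"
proof -
  have lin: "lin_brel \<Gamma>"
    using assms(2) unfolding isometric_boundary_pair_def by simp
  note subset_iff = Domain_gamma_field_subset_iff[OF lin \<open>l \<noteq> m\<close>, folded Domain_Weyl]
  show ?thesis
    unfolding subset_iff inv_rel_def
    using gamma_field_resolvent_identity[OF lin] by blast
qed

end
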